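(* Let $d\ge2$, $1\le m<d$, $\delta\in(0,1)$, let $f=(f_1,\dots,f_L):\mathbb{R}^d\to\mathbb{R}^L$ be a classifier, $\boldsymbol{x}_0\in\mathbb{R}^d$ with label $\hat k$ and $\|\boldsymbol{r}^*\|_2<\infty$, let $\mathcal S$ be a random $m$-dimensional subspace, and let $0\le l\le u$, $t\ge0$. Let $p\in\arg\min_{i\neq\hat k}\|\boldsymbol{r}^i\|_2$ and define the (deterministic) set $$A=\Big\{k\neq\hat k:\ \|\boldsymbol{r}^k\|_2\ge1.45\sqrt{\zeta_2(m,\delta)}\sqrt{\tfrac dm}\,\|\boldsymbol{r}^*\|_2\Big\}.$$ Assume that for every $k\ne\hat k$ with $k\notin A$, $\mathbb{P}\big(l\le\|\boldsymbol{r}^k_{\mathcal S}\|_2/\|\boldsymbol{r}^k\|_2\le u\big)\ge1-\delta$, and that $\mathbb{P}\big(\|\boldsymbol{r}^p_{\mathcal S}\|_2\ge1.45\sqrt{\zeta_2(m,\delta)}\sqrt{\tfrac dm}\,\|\boldsymbol{r}^*\|_2\big)\le t$. Then $$\mathbb{P}\Big(l\le\frac{\|\boldsymbol{r}^*_{\mathcal S}\|_2}{\|\boldsymbol{r}^*\|_2}\le u\Big)\ge1-(L+1)\delta-t.$$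
   Context: For an $L$-class classifier $f=(f_1,\dots,f_L):\mathbb{R}^d\to\mathbb{R}^L$ and a point $\boldsymbol{x}_0$ with estimated label $\hat k=\arg\max_k f_k(\boldsymbol{x}_0)$, and for a linear subspace $\mathcal{S}\subseteq\mathbb{R}^d$ and $k\neq\hat k$, define $\|\boldsymbol{r}^k_{\mathcal S}\|_2=\inf\{\|\boldsymbol{r}\|_2:\boldsymbol{r}\in\mathcal{S},\ f_k(\boldsymbol{x}_0+\boldsymbol{r})\ge f_{\hat k}(\boldsymbol{x}_0+\boldsymbol{r})\}$ (with $\inf\emptyset=+\infty$), $\|\boldsymbol{r}^k\|_2:=\|\boldsymbol{r}^k_{\mathbb{R}^d}\|_2$, $\|\boldsymbol{r}^*_{\mathcal S}\|_2=\min_{k\neq\hat k}\|\boldsymbol{r}^k_{\mathcal S}\|_2$ and $\|\boldsymbol{r}^*\|_2=\min_{k\neq\hat k}\|\boldsymbol{r}^k\|_2$. A random $m$-dimensional subspace of $\mathbb{R}^d$ is the span of $m$ independent vectors drawn uniformly from the unit sphere $\mathbb{S}^{d-1}$. For $m\ge1$ and $\delta\in(0,1)$, $\zeta_2(m,\delta)=\Big(\max\big(\tfrac1e\delta^{2/m},\,1-\sqrt{2(1-\delta^{2/m})}\big)\Big)^{-1}$. *)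

theory Defs
  imports "HOL-Probability.Probability"
begin

text \<open>Classifier f : R^d -> R^L is modelled as f :: 'a => nat => real, with classes 1..L.\<close>

definition classes :: "nat \<Rightarrow> nat set" where
  "classes L = {1..L}"

text \<open>Minimal adversarial perturbation norm towards class k, restricted to a subspace S
  (infimum of the empty set is +infinity in ereal).\<close>
definition rS :: "('a::real_normed_vector \<Rightarrow> nat \<Rightarrow> real) \<Rightarrow> 'a \<Rightarrow> nat \<Rightarrow> 'a set \<Rightarrow> nat \<Rightarrow> ereal" where
  "rS f x0 khat S k = Inf {ereal (norm r) | r. r \<in> S \<and> f (x0 + r) k \<ge> f (x0 + r) khat}"

definition r_full :: "('a::real_normed_vector \<Rightarrow> nat \<Rightarrow> real) \<Rightarrow> 'a \<Rightarrow> nat \<Rightarrow> nat \<Rightarrow> ereal" where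
  "r_full f x0 khat k = rS f x0 khat UNIV k"

definition rS_star :: "('a::real_normed_vector \<Rightarrow> nat \<Rightarrow> real) \<Rightarrow> nat \<Rightarrow> 'a \<Rightarrow> nat \<Rightarrow> 'a set \<Rightarrow> ereal" where
  "rS_star f L x0 khat S = (INF k \<in> classes L - {khat}. rS f x0 khat S k)"

definition r_star :: "('a::real_normed_vector \<Rightarrow> nat \<Rightarrow> real) \<Rightarrow> nat \<Rightarrow> 'a \<Rightarrow> nat \<Rightarrow> ereal" where
  "r_star f L x0 khat = rS_star f L x0 khat UNIV"

definition zeta2 :: "nat \<Rightarrow> real \<Rightarrow> real" where
  "zeta2 m \<delta> = 1 / max ((1 / exp 1) * \<delta> powr (2 / real m))
                          (1 - sqrt (2 * (1 - \<delta> powr (2 / real m))))"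

text \<open>Uniform (normalized surface) measure on the unit sphere S^{d-1}, obtained as the
  radial projection of the uniform distribution on the unit ball.\<close>
definition uniform_sphere :: "'a::euclidean_space measure" where
  "uniform_sphere = distr (uniform_measure lborel (ball 0 1)) borel (\<lambda>x. x /\<^sub>R norm x)"

definition sphere_vectors :: "nat \<Rightarrow> (nat \<Rightarrow> 'a::euclidean_space) measure" where
  "sphere_vectors m = PiM {..<m} (\<lambda>_. uniform_sphere)"

definition rand_subspace :: "nat \<Rightarrow> (nat \<Rightarrow> 'a::real_vector) \<Rightarrow> 'a set" where
  "rand_subspace m \<omega> = span (\<omega> ` {..<m})"

end

theory Submission
  imports Defs
begin

text \<open>The restricted minimum over the classes is attained at some class j. Off the event that
  the subspace distance towards p reaches the threshold c, the class j lies outside A: a class in A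
  has subspace distance at least its full distance, hence at least c, which exceeds the subspace
  distance towards p. If moreover every class outside A satisfies its ratio bound, the lower bound
  for j passes to the minimum because the full distance of j is at least the global minimum, and
  the upper bound for p passes to it because p, too, lies outside A. A union bound over the at most
  L classes outside A and the event for p gives the claim. The value of c plays no role beyond
  being finite.\<close>

lemma prob_space_uniform_sphere: "prob_space (uniform_sphere :: 'a::euclidean_space measure)"
  unfolding uniform_sphere_def
proof (rule prob_space.prob_space_distr)
  have "measure lborel (ball (0::'a) 1) > 0" using content_ball_pos[of 1 "0::'a"] by simp
  then have "emeasure lborel (ball (0::'a) 1) \<noteq> 0"
    by (metis measure_def enn2real_0 less_irrefl)
  then show "prob_space (uniform_measure lborel (ball (0::'a) 1))"
    using emeasure_lborel_ball_finite[of "0::'a" 1] by (intro prob_space_uniform_measure) auto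
  show "(\<lambda>x::'a. x /\<^sub>R norm x) \<in> uniform_measure lborel (ball 0 1) \<rightarrow>\<^sub>M borel"
    by (simp add: measurable_cong_sets[OF sets_uniform_measure refl]) measurable
qed

lemma prob_space_sphere_vectors:
  "prob_space (sphere_vectors m :: (nat \<Rightarrow> 'a::euclidean_space) measure)"
  unfolding sphere_vectors_def by (intro prob_space_PiM prob_space_uniform_sphere)

lemma rS_nonneg: "0 \<le> rS f x0 khat S k"
  unfolding rS_def by (rule Inf_greatest) auto

lemma r_full_le_rS: "r_full f x0 khat k \<le> rS f x0 khat S k"
  unfolding rS_def r_full_def by (rule Inf_superset_mono) auto

lemma INF_ratio_between:
  fixes r s :: "'k \<Rightarrow> ereal" and c :: ereal and \<rho> l u :: real
  assumes "finite K" "p \<in> K"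
    and rp: "r p = ereal \<rho>" and "0 < \<rho>" and r_ge: "\<forall>k\<in>K. ereal \<rho> \<le> r k"
    and "c < \<infinity>" and r_le_s: "\<forall>k\<in>K. r k \<le> s k" and "s p < c" and "0 \<le> l"
    and ratio: "\<forall>k\<in>K. r k < c \<longrightarrow> ereal l \<le> s k / r k \<and> s k / r k \<le> ereal u"
  shows "ereal l \<le> (INF k\<in>K. s k) / ereal \<rho> \<and> (INF k\<in>K. s k) / ereal \<rho> \<le> ereal u"
proof
  obtain j where j: "j \<in> K" and sj: "(INF k\<in>K. s k) = s j"
    using Min_in[of "s ` K"] Min_Inf[of "s ` K"] \<open>finite K\<close> \<open>p \<in> K\<close> by auto
  have INF_le_sp: "(INF k\<in>K. s k) \<le> s p" using \<open>p \<in> K\<close> by (rule INF_lower)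
  have "r j < c" using r_le_s j sj INF_le_sp \<open>s p < c\<close> by (metis order_le_less_trans)
  then obtain \<rho>j where \<rho>j: "r j = ereal \<rho>j" "\<rho> \<le> \<rho>j"
    using r_ge j \<open>c < \<infinity>\<close> by (cases "r j") auto
  have "ereal l \<le> s j / ereal \<rho>j" using ratio j \<open>r j < c\<close> \<rho>j by auto
  then have "ereal (\<rho>j * l) \<le> s j" using \<open>0 < \<rho>\<close> \<rho>j by (simp add: ereal_le_divide_pos)
  moreover have "\<rho> * l \<le> \<rho>j * l" using \<rho>j \<open>0 \<le> l\<close> by (simp add: mult_right_mono)
  ultimately have "ereal (\<rho> * l) \<le> (INF k\<in>K. s k)" using sj by (metis ereal_less_eq(3) order.trans)
  then show "ereal l \<le> (INF k\<in>K. s k) / ereal \<rho>" using \<open>0 < \<rho>\<close> by (simp add: ereal_le_divide_pos)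
next
  have "r p < c" using r_le_s \<open>p \<in> K\<close> \<open>s p < c\<close> by (meson order_le_less_trans)
  then have "s p / ereal \<rho> \<le> ereal u" using ratio \<open>p \<in> K\<close> rp by auto
  then have "s p \<le> ereal (\<rho> * u)" using \<open>0 < \<rho>\<close> by (simp add: ereal_divide_le_pos)
  then have "(INF k\<in>K. s k) \<le> ereal (\<rho> * u)" using \<open>p \<in> K\<close> by (meson INF_lower order.trans)
  then show "(INF k\<in>K. s k) / ereal \<rho> \<le> ereal u" using \<open>0 < \<rho>\<close> by (simp add: ereal_divide_le_pos)
qed

lemma rS_star_ratio_between:
  fixes c :: ereal and \<rho> l u :: real
  assumes p: "p \<in> classes L - {khat}" "r_full f x0 khat p = r_star f L x0 khat"
    and R: "r_star f L x0 khat = ereal \<rho>" and "0 < \<rho>"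
    and "c < \<infinity>" and "rS f x0 khat S p < c" and "0 \<le> l"
    and ratio: "\<forall>k\<in>classes L - {khat}. r_full f x0 khat k < c \<longrightarrow>
      ereal l \<le> rS f x0 khat S k / r_full f x0 khat k \<and> rS f x0 khat S k / r_full f x0 khat k \<le> ereal u"
  shows "ereal l \<le> rS_star f L x0 khat S / r_star f L x0 khat \<and>
    rS_star f L x0 khat S / r_star f L x0 khat \<le> ereal u"
proof -
  have \<rho>_le: "\<forall>k\<in>classes L - {khat}. ereal \<rho> \<le> r_full f x0 khat k"
    using R unfolding r_star_def rS_star_def r_full_def by (metis INF_lower)
  show ?thesis
    unfolding rS_star_def R
    by (rule INF_ratio_between[where r = "r_full f x0 khat" and p = p and c = c])
      (use \<rho>_le p R assms(4-7) ratio in \<open>auto simp: classes_def r_full_le_rS\<close>)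
qed

lemma (in prob_space) prob_ge_union_bound:
  assumes "finite I" "\<delta> < 1"
    and Q: "{\<omega> \<in> space M. Q \<omega>} \<in> events" and B: "{\<omega> \<in> space M. B \<omega>} \<in> events"
    and E: "\<forall>i\<in>I. 1 - \<delta> \<le> prob {\<omega> \<in> space M. E i \<omega>}"
    and cover: "\<forall>\<omega>\<in>space M. \<not> B \<omega> \<and> (\<forall>i\<in>I. E i \<omega>) \<longrightarrow> Q \<omega>"
  shows "1 - real (card I) * \<delta> - prob {\<omega> \<in> space M. B \<omega>} \<le> prob {\<omega> \<in> space M. Q \<omega>}"
proof -
  define F where "F i = space M - {\<omega> \<in> space M. E i \<omega>}" for i
  \<comment> \<open>Non-measurable sets have measure 0, so the probability bounds force measurability.\<close>
  have "{\<omega> \<in> space M. E i \<omega>} \<in> events" if "i \<in> I" for i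
    using E that \<open>\<delta> < 1\<close> measure_notin_sets by fastforce
  then have F: "i \<in> I \<Longrightarrow> F i \<in> events \<and> prob (F i) \<le> \<delta>" for i
    using E by (auto simp: F_def prob_compl)
  then have U: "(\<Union>i\<in>I. F i) \<in> events" by (intro sets.finite_UN \<open>finite I\<close>) auto
  have "prob (space M - {\<omega> \<in> space M. Q \<omega>}) \<le> prob ((\<Union>i\<in>I. F i) \<union> {\<omega> \<in> space M. B \<omega>})"
    using cover U B by (intro finite_measure_mono) (auto simp: F_def)
  also have "\<dots> \<le> prob (\<Union>i\<in>I. F i) + prob {\<omega> \<in> space M. B \<omega>}"
    using U B by (intro measure_subadditive) (auto simp: emeasure_eq_measure)
  also have "prob (\<Union>i\<in>I. F i) \<le> (\<Sum>i\<in>I. prob (F i))"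
    using F \<open>finite I\<close> by (intro finite_measure_subadditive_finite) auto
  also have "\<dots> \<le> (\<Sum>i\<in>I. \<delta>)"
    using F by (intro sum_mono) auto
  finally show ?thesis using prob_compl[OF Q] by simp
qed

theorem lemma5:
  fixes f :: "'a::euclidean_space \<Rightarrow> nat \<Rightarrow> real"
    and L m :: nat and x0 :: 'a and khat p :: nat and \<delta> l u t :: real
  defines "P \<equiv> (sphere_vectors m :: (nat \<Rightarrow> 'a) measure)"
    and "c \<equiv> ereal (1.45 * sqrt (zeta2 m \<delta>) * sqrt (real DIM('a) / real m)) * r_star f L x0 khat"
    and "A \<equiv> {k \<in> classes L - {khat}. r_full f x0 khat k \<ge>
         ereal (1.45 * sqrt (zeta2 m \<delta>) * sqrt (real DIM('a) / real m)) * r_star f L x0 khat}"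
  assumes "DIM('a) \<ge> 2" and "1 \<le> m" and "m < DIM('a)"
    and "0 < \<delta>" and "\<delta> < 1"
    and khat: "khat \<in> classes L" "\<forall>k \<in> classes L. f x0 k \<le> f x0 khat"
    and fin: "r_star f L x0 khat < \<infinity>"
    and "0 \<le> l" and "l \<le> u" and "0 \<le> t"
    and p: "p \<in> classes L - {khat}" "r_full f x0 khat p = r_star f L x0 khat"
    and hk: "\<forall>k \<in> classes L - {khat}. k \<notin> A \<longrightarrow>
              measure P {\<omega> \<in> space P.
                 ereal l \<le> rS f x0 khat (rand_subspace m \<omega>) k / r_full f x0 khat k \<and>
                 rS f x0 khat (rand_subspace m \<omega>) k / r_full f x0 khat k \<le> ereal u} \<ge> 1 - \<delta>"
    and hp_meas: "{\<omega> \<in> space P. rS f x0 khat (rand_subspace m \<omega>) p \<ge> c} \<in> sets P"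
    and hp: "measure P {\<omega> \<in> space P. rS f x0 khat (rand_subspace m \<omega>) p \<ge> c} \<le> t"
    and concl_meas: "{\<omega> \<in> space P.
                 ereal l \<le> rS_star f L x0 khat (rand_subspace m \<omega>) / r_star f L x0 khat \<and>
                 rS_star f L x0 khat (rand_subspace m \<omega>) / r_star f L x0 khat \<le> ereal u} \<in> sets P"
  shows "measure P {\<omega> \<in> space P.
                 ereal l \<le> rS_star f L x0 khat (rand_subspace m \<omega>) / r_star f L x0 khat \<and>
                 rS_star f L x0 khat (rand_subspace m \<omega>) / r_star f L x0 khat \<le> ereal u}
           \<ge> 1 - (real L + 1) * \<delta> - t"
proof -
  interpret prob_space P unfolding P_def by (rule prob_space_sphere_vectors)
  have "0 \<le> r_star f L x0 khat"
    unfolding r_star_def rS_star_def by (rule INF_greatest) (rule rS_nonneg)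
  show ?thesis
  proof (cases "r_star f L x0 khat = 0")
    case True
    then have "{\<omega> \<in> space P. rS f x0 khat (rand_subspace m \<omega>) p \<ge> c} = space P"
      unfolding c_def by (simp add: rS_nonneg)
    then have "1 \<le> t" using hp by (simp add: prob_space)
    then show ?thesis using \<open>0 < \<delta>\<close> measure_nonneg[of P]
      by (smt (verit) mult_nonneg_nonneg of_nat_0_le_iff)
  next
    case False
    with \<open>0 \<le> r_star f L x0 khat\<close> fin obtain \<rho> where R: "r_star f L x0 khat = ereal \<rho>" "0 < \<rho>"
      by (cases "r_star f L x0 khat") auto
    have "c < \<infinity>" unfolding c_def R by simp
    let ?I = "classes L - {khat} - A"
    have "real (card ?I) \<le> real L"
      using card_mono[of "{1..L}" ?I] unfolding classes_def by auto
    then have "1 - (real L + 1) * \<delta> - t \<le> 1 - real (card ?I) * \<delta> - t"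
      using \<open>0 < \<delta>\<close> by (smt (verit) mult_right_mono)
    also have "\<dots> \<le> 1 - real (card ?I) * \<delta> - measure P {\<omega> \<in> space P. c \<le> rS f x0 khat (rand_subspace m \<omega>) p}"
      using hp by simp
    finally show ?thesis
    proof (rule order.trans[OF _ prob_ge_union_bound[OF _ \<open>\<delta> < 1\<close> concl_meas hp_meas]])
      show "finite ?I" by (simp add: classes_def)
      show "\<forall>k\<in>?I. 1 - \<delta> \<le> measure P {\<omega> \<in> space P.
          ereal l \<le> rS f x0 khat (rand_subspace m \<omega>) k / r_full f x0 khat k \<and>
          rS f x0 khat (rand_subspace m \<omega>) k / r_full f x0 khat k \<le> ereal u}"
        using hk by blast
      show "\<forall>\<omega>\<in>space P. \<not> c \<le> rS f x0 khat (rand_subspace m \<omega>) p \<and> (\<forall>k\<in>?I.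
          ereal l \<le> rS f x0 khat (rand_subspace m \<omega>) k / r_full f x0 khat k \<and>
          rS f x0 khat (rand_subspace m \<omega>) k / r_full f x0 khat k \<le> ereal u) \<longrightarrow>
          ereal l \<le> rS_star f L x0 khat (rand_subspace m \<omega>) / r_star f L x0 khat \<and>
          rS_star f L x0 khat (rand_subspace m \<omega>) / r_star f L x0 khat \<le> ereal u"
        unfolding A_def c_def[symmetric]
        by (auto simp: not_le intro!: rS_star_ratio_between[OF p R \<open>c < \<infinity>\<close> _ \<open>0 \<le> l\<close>])
    qed
  qed
qed

end
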